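(* Let $(G,\mathcal{B}_1,\mathcal{B}_2)$ be a Rota-Baxter system of groups, and set $G_1=\mathcal{B}_1(G)$, $G_2=\mathcal{B}_2(G)$, $H_1=\mathcal{B}_1(\operatorname{Ker}(\mathcal{B}_2))$, $H_2=\mathcal{B}_2(\operatorname{Ker}(\mathcal{B}_1))$, where $\operatorname{Ker}(\mathcal{B}_i)=\{a\in G\mid\mathcal{B}_i(a)=1_G\}$. Then $H_1$ is a normal subgroup of the group $G_1$, $H_2$ is a normal subgroup of the group $G_2$, and the map $\Theta:G_1/H_1\to G_2/H_2$, $\Theta(\mathcal{B}_1(a)H_1)=\mathcal{B}_2(a)H_2$ for $a\in G$, is well defined and is a group anti-isomorphism (a bijection with $\Theta(xy)=\Theta(y)\Theta(x)$).
   Context: A Rota-Baxter system of groups is a triple $(G,\mathcal{B}_1,\mathcal{B}_2)$ where $G$ is a group with identity $1_G$ and $\mathcal{B}_1,\mathcal{B}_2:G\to G$ are maps such that for all $a,b\in G$: $\mathcal{B}_1(a)\mathcal{B}_1(b)=\mathcal{B}_1(\mathcal{B}_1(a)b\mathcal{B}_2(a))$ and $\mathcal{B}_2(b)\mathcal{B}_2(a)=\mathcal{B}_2(\mathcal{B}_1(a)b\mathcal{B}_2(a))$. *)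

theory Defs
  imports "HOL-Algebra.Algebra"
begin

definition rota_baxter_system :: "('a, 'b) monoid_scheme \<Rightarrow> ('a \<Rightarrow> 'a) \<Rightarrow> ('a \<Rightarrow> 'a) \<Rightarrow> bool" where
  "rota_baxter_system G B1 B2 \<longleftrightarrow> group G \<and>
     B1 \<in> carrier G \<rightarrow> carrier G \<and> B2 \<in> carrier G \<rightarrow> carrier G \<and>
     (\<forall>a \<in> carrier G. \<forall>b \<in> carrier G.
        B1 a \<otimes>\<^bsub>G\<^esub> B1 b = B1 (B1 a \<otimes>\<^bsub>G\<^esub> b \<otimes>\<^bsub>G\<^esub> B2 a) \<and>
        B2 b \<otimes>\<^bsub>G\<^esub> B2 a = B2 (B1 a \<otimes>\<^bsub>G\<^esub> b \<otimes>\<^bsub>G\<^esub> B2 a))"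

definition rb_ker :: "('a, 'b) monoid_scheme \<Rightarrow> ('a \<Rightarrow> 'a) \<Rightarrow> 'a set" where
  "rb_ker G B = {a \<in> carrier G. B a = \<one>\<^bsub>G\<^esub>}"

end

theory Submission
  imports Defs
begin

text \<open>The pairs (B1 a, B2 a) form a subgroup S of G \<times> G^op: the two Rota-Baxter identities say
  exactly that S is closed under (x, y)(x', y') = (x x', y' y), and solving B1 a b B2 a = c for b
  produces the neutral pair and inverse pairs. Then G1, G2 are the projections of S, while H1 and
  H2 are its kernels {x. (x, 1) \<in> S} and {y. (1, y) \<in> S}, so the theorem is Goursat's lemma for a
  subgroup of a product, with one factor replaced by its opposite: S relates x to y iff their
  cosets correspond under the anti-isomorphism G1/H1 \<rightarrow> G2/H2.\<close>

lemma (in group) r_coset_eq_iff: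
  assumes "subgroup K G" "x \<in> carrier G" "y \<in> carrier G"
  shows "K #> x = K #> y \<longleftrightarrow> x \<otimes> inv y \<in> K"
proof
  assume "K #> x = K #> y"
  then show "x \<otimes> inv y \<in> K"
    using assms rcos_self subgroup.rcos_module_imp[OF assms(1) is_group] by metis
next
  assume "x \<otimes> inv y \<in> K"
  then show "K #> x = K #> y"
    using assms subgroup.rcos_module_rev[OF assms(1) is_group] repr_independence by metis
qed

lemma (in normal) mult_inv_mem_commute:
  assumes "x \<in> carrier G" "y \<in> carrier G"
  shows "x \<otimes> inv y \<in> H \<longleftrightarrow> inv y \<otimes> x \<in> H"
proof
  assume "x \<otimes> inv y \<in> H"
  then have "inv y \<otimes> (x \<otimes> inv y) \<otimes> y \<in> H"
    using assms inv_op_closed1 by simp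
  then show "inv y \<otimes> x \<in> H" using assms by (simp add: m_assoc)
next
  assume "inv y \<otimes> x \<in> H"
  then have "y \<otimes> (inv y \<otimes> x) \<otimes> inv y \<in> H"
    using assms inv_op_closed2 by simp
  then show "x \<otimes> inv y \<in> H" using assms by (simp add: m_assoc[symmetric])
qed

text \<open>S is a subgroup of G \<times> H^op; HOL-Algebra has no opposite group, so the closure
  conditions are spelled out.\<close>

locale op_product_subgroup = G: group G + H: group H for G (structure) and H (structure) +
  fixes S :: "('a \<times> 'c) set"
  assumes subset: "S \<subseteq> carrier G \<times> carrier H"
    and one_mem: "(\<one>, \<one>\<^bsub>H\<^esub>) \<in> S"
    and mult_mem: "(x, y) \<in> S \<Longrightarrow> (x', y') \<in> S \<Longrightarrow> (x \<otimes> x', y' \<otimes>\<^bsub>H\<^esub> y) \<in> S"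
    and inv_mem: "(x, y) \<in> S \<Longrightarrow> (inv x, inv\<^bsub>H\<^esub> y) \<in> S"
begin

abbreviation fst_kernel :: "'a set" where "fst_kernel \<equiv> {x. (x, \<one>\<^bsub>H\<^esub>) \<in> S}"

abbreviation snd_kernel :: "'c set" where "snd_kernel \<equiv> {y. (\<one>, y) \<in> S}"

lemma swap: "op_product_subgroup H G (prod.swap ` S)"
proof (intro op_product_subgroup.intro op_product_subgroup_axioms.intro H.is_group G.is_group)
  show "prod.swap ` S \<subseteq> carrier H \<times> carrier G" using subset by auto
  show "(\<one>\<^bsub>H\<^esub>, \<one>) \<in> prod.swap ` S" using one_mem by simp
next
  fix y x y' x' assume "(y, x) \<in> prod.swap ` S" "(y', x') \<in> prod.swap ` S"
  then show "(y \<otimes>\<^bsub>H\<^esub> y', x' \<otimes> x) \<in> prod.swap ` S" using mult_mem by simp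
next
  fix y x assume "(y, x) \<in> prod.swap ` S"
  then show "(inv\<^bsub>H\<^esub> y, inv x) \<in> prod.swap ` S" using inv_mem by simp
qed

lemma subgroup_fst_image: "subgroup (fst ` S) G"
proof (rule G.subgroupI)
  show "fst ` S \<subseteq> carrier G" using subset by auto
  show "fst ` S \<noteq> {}" using one_mem by blast
next
  fix x assume "x \<in> fst ` S"
  then show "inv x \<in> fst ` S" using inv_mem by force
next
  fix x x' assume "x \<in> fst ` S" "x' \<in> fst ` S"
  then show "x \<otimes> x' \<in> fst ` S" using mult_mem by force
qed

lemma subgroup_snd_image: "subgroup (snd ` S) H"
  using op_product_subgroup.subgroup_fst_image[OF swap] by (simp add: image_image)

lemma fst_kernel_iff_snd_kernel:
  assumes "(x, y) \<in> S"
  shows "x \<in> fst_kernel \<longleftrightarrow> y \<in> snd_kernel"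
proof -
  have "x \<in> carrier G" "y \<in> carrier H" using assms subset by auto
  show ?thesis
  proof
    assume "x \<in> fst_kernel"
    from mult_mem[OF inv_mem[OF this[simplified]] assms] show "y \<in> snd_kernel"
      using \<open>x \<in> carrier G\<close> \<open>y \<in> carrier H\<close> by simp
  next
    assume "y \<in> snd_kernel"
    from mult_mem[OF assms inv_mem[OF this[simplified]]] show "x \<in> fst_kernel"
      using \<open>x \<in> carrier G\<close> \<open>y \<in> carrier H\<close> by simp
  qed
qed

end

locale op_subdirect_product = op_product_subgroup +
  assumes fst_image: "fst ` S = carrier G"
    and snd_image: "snd ` S = carrier H"

lemma (in op_product_subgroup) op_subdirect_product_restrict:
  "op_subdirect_product (G\<lparr>carrier := fst ` S\<rparr>) (H\<lparr>carrier := snd ` S\<rparr>) S"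
proof (intro op_subdirect_product.intro op_product_subgroup.intro
    op_product_subgroup_axioms.intro op_subdirect_product_axioms.intro)
  show "group (G\<lparr>carrier := fst ` S\<rparr>)" by (rule G.subgroup_imp_group[OF subgroup_fst_image])
  show "group (H\<lparr>carrier := snd ` S\<rparr>)" by (rule H.subgroup_imp_group[OF subgroup_snd_image])
  show "S \<subseteq> carrier (G\<lparr>carrier := fst ` S\<rparr>) \<times> carrier (H\<lparr>carrier := snd ` S\<rparr>)" by force
next
  fix x y assume "(x, y) \<in> S"
  then have "(inv x, inv\<^bsub>H\<^esub> y) \<in> S" "x \<in> fst ` S" "y \<in> snd ` S" using inv_mem by force+
  then show "(inv\<^bsub>G\<lparr>carrier := fst ` S\<rparr>\<^esub> x, inv\<^bsub>H\<lparr>carrier := snd ` S\<rparr>\<^esub> y) \<in> S"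
    using G.m_inv_consistent[OF subgroup_fst_image] H.m_inv_consistent[OF subgroup_snd_image]
    by simp
qed (use one_mem mult_mem in auto)

context op_subdirect_product
begin

lemma swap_subdirect: "op_subdirect_product H G (prod.swap ` S)"
  using swap fst_image snd_image
  by (simp add: op_subdirect_product_def op_subdirect_product_axioms_def image_image)

lemma fst_kernel_normal: "fst_kernel \<lhd> G"
proof -
  have "subgroup fst_kernel G"
  proof (rule G.subgroupI)
    show "fst_kernel \<subseteq> carrier G" using subset by auto
    show "fst_kernel \<noteq> {}" using one_mem by auto
  next
    fix x assume "x \<in> fst_kernel"
    then show "inv x \<in> fst_kernel" using inv_mem by fastforce
  next
    fix x x' assume "x \<in> fst_kernel" "x' \<in> fst_kernel"
    then show "x \<otimes> x' \<in> fst_kernel" using mult_mem by fastforce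
  qed
  moreover have "g \<otimes> k \<otimes> inv g \<in> fst_kernel" if "g \<in> carrier G" "k \<in> fst_kernel" for g k
  proof -
    obtain h where gh: "(g, h) \<in> S" using \<open>g \<in> carrier G\<close> fst_image by force
    then have "h \<in> carrier H" using subset by auto
    have "(g \<otimes> k \<otimes> inv g, inv\<^bsub>H\<^esub> h \<otimes>\<^bsub>H\<^esub> (\<one>\<^bsub>H\<^esub> \<otimes>\<^bsub>H\<^esub> h)) \<in> S"
      using mult_mem[OF mult_mem[OF gh] inv_mem[OF gh]] \<open>k \<in> fst_kernel\<close> by simp
    then show ?thesis using \<open>h \<in> carrier H\<close> by simp
  qed
  ultimately show ?thesis by (simp add: G.normal_inv_iff)
qed

lemma snd_kernel_normal: "snd_kernel \<lhd> H"
  using op_subdirect_product.fst_kernel_normal[OF swap_subdirect] by simp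

text \<open>The quotient (x, y)(x', y')\<inverse> = (x x'\<inverse>, y'\<inverse> y) puts the inverse on opposite
  sides in the two factors; normality of the second kernel lets us move it back.\<close>

lemma r_coset_eq_iff_r_coset_eq:
  assumes "(x, y) \<in> S" "(x', y') \<in> S"
  shows "fst_kernel #> x = fst_kernel #> x' \<longleftrightarrow> snd_kernel #>\<^bsub>H\<^esub> y = snd_kernel #>\<^bsub>H\<^esub> y'"
proof -
  have carrier: "x \<in> carrier G" "x' \<in> carrier G" "y \<in> carrier H" "y' \<in> carrier H"
    using assms subset by auto
  have "(x \<otimes> inv x', inv\<^bsub>H\<^esub> y' \<otimes>\<^bsub>H\<^esub> y) \<in> S"
    using mult_mem[OF assms(1) inv_mem[OF assms(2)]] .
  then have "x \<otimes> inv x' \<in> fst_kernel \<longleftrightarrow> inv\<^bsub>H\<^esub> y' \<otimes>\<^bsub>H\<^esub> y \<in> snd_kernel"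
    by (rule fst_kernel_iff_snd_kernel)
  also have "\<dots> \<longleftrightarrow> y \<otimes>\<^bsub>H\<^esub> inv\<^bsub>H\<^esub> y' \<in> snd_kernel"
    using normal.mult_inv_mem_commute[OF snd_kernel_normal] carrier by blast
  finally show ?thesis
    using G.r_coset_eq_iff[OF normal_imp_subgroup[OF fst_kernel_normal]]
      H.r_coset_eq_iff[OF normal_imp_subgroup[OF snd_kernel_normal]] carrier
    by simp
qed

definition coset_map :: "'a set \<Rightarrow> 'c set" where
  "coset_map P = (SOME Q. \<exists>(x, y) \<in> S. P = fst_kernel #> x \<and> Q = snd_kernel #>\<^bsub>H\<^esub> y)"

lemma coset_map_r_coset:
  assumes "(x, y) \<in> S"
  shows "coset_map (fst_kernel #> x) = snd_kernel #>\<^bsub>H\<^esub> y"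
proof -
  have "\<exists>(x', y') \<in> S. fst_kernel #> x = fst_kernel #> x' \<and>
      coset_map (fst_kernel #> x) = snd_kernel #>\<^bsub>H\<^esub> y'"
    unfolding coset_map_def by (rule someI[of _ "snd_kernel #>\<^bsub>H\<^esub> y"]) (use assms in blast)
  then show ?thesis using r_coset_eq_iff_r_coset_eq assms by auto
qed

lemma coset_map_l_coset:
  assumes "(x, y) \<in> S"
  shows "coset_map (x <# fst_kernel) = y <#\<^bsub>H\<^esub> snd_kernel"
  using assms subset coset_map_r_coset normal.coset_eq[OF fst_kernel_normal]
    normal.coset_eq[OF snd_kernel_normal] by fastforce

lemma carrier_FactGroup_fst: "carrier (G Mod fst_kernel) = (\<lambda>p. fst_kernel #> fst p) ` S"
  by (auto simp: FactGroup_def RCOSETS_def simp flip: fst_image)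

lemma carrier_FactGroup_snd: "carrier (H Mod snd_kernel) = (\<lambda>p. snd_kernel #>\<^bsub>H\<^esub> snd p) ` S"
  by (auto simp: FactGroup_def RCOSETS_def simp flip: snd_image)

lemma coset_map_bij: "bij_betw coset_map (carrier (G Mod fst_kernel)) (carrier (H Mod snd_kernel))"
proof (rule bij_betw_imageI)
  show "inj_on coset_map (carrier (G Mod fst_kernel))"
  proof (rule inj_onI)
    fix P Q assume "P \<in> carrier (G Mod fst_kernel)" "Q \<in> carrier (G Mod fst_kernel)"
      and "coset_map P = coset_map Q"
    then obtain x y x' y' where "(x, y) \<in> S" "(x', y') \<in> S"
      and "P = fst_kernel #> x" "Q = fst_kernel #> x'"
      and "snd_kernel #>\<^bsub>H\<^esub> y = snd_kernel #>\<^bsub>H\<^esub> y'"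
      unfolding carrier_FactGroup_fst by (auto simp: coset_map_r_coset)
    then show "P = Q" using r_coset_eq_iff_r_coset_eq by blast
  qed
  show "coset_map ` carrier (G Mod fst_kernel) = carrier (H Mod snd_kernel)"
    unfolding carrier_FactGroup_fst carrier_FactGroup_snd image_image
    by (rule image_cong) (auto simp: coset_map_r_coset)
qed

lemma coset_map_mult:
  assumes "P \<in> carrier (G Mod fst_kernel)" "Q \<in> carrier (G Mod fst_kernel)"
  shows "coset_map (P \<otimes>\<^bsub>G Mod fst_kernel\<^esub> Q) = coset_map Q \<otimes>\<^bsub>H Mod snd_kernel\<^esub> coset_map P"
proof -
  obtain x y x' y' where S: "(x, y) \<in> S" "(x', y') \<in> S"
    and PQ: "P = fst_kernel #> x" "Q = fst_kernel #> x'"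
    using assms unfolding carrier_FactGroup_fst by auto
  have carrier: "x \<in> carrier G" "x' \<in> carrier G" "y \<in> carrier H" "y' \<in> carrier H"
    using S subset by auto
  have "coset_map (P \<otimes>\<^bsub>G Mod fst_kernel\<^esub> Q) = coset_map (fst_kernel #> (x \<otimes> x'))"
    using PQ carrier normal.rcos_sum[OF fst_kernel_normal] by simp
  also have "\<dots> = snd_kernel #>\<^bsub>H\<^esub> (y' \<otimes>\<^bsub>H\<^esub> y)"
    using coset_map_r_coset mult_mem[OF S] by blast
  also have "\<dots> = coset_map Q \<otimes>\<^bsub>H Mod snd_kernel\<^esub> coset_map P"
    using PQ S carrier normal.rcos_sum[OF snd_kernel_normal] by (simp add: coset_map_r_coset)
  finally show ?thesis .
qed

end

locale rota_baxter_group = group G for G (structure) +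
  fixes B1 B2 :: "'a \<Rightarrow> 'a"
  assumes rota_baxter_system: "rota_baxter_system G B1 B2"
begin

lemma B1_closed: "a \<in> carrier G \<Longrightarrow> B1 a \<in> carrier G"
  and B2_closed: "a \<in> carrier G \<Longrightarrow> B2 a \<in> carrier G"
  using rota_baxter_system by (auto simp: rota_baxter_system_def)

lemma B1_mult: "a \<in> carrier G \<Longrightarrow> b \<in> carrier G \<Longrightarrow> B1 a \<otimes> B1 b = B1 (B1 a \<otimes> b \<otimes> B2 a)"
  and B2_mult: "a \<in> carrier G \<Longrightarrow> b \<in> carrier G \<Longrightarrow> B2 b \<otimes> B2 a = B2 (B1 a \<otimes> b \<otimes> B2 a)"
  using rota_baxter_system by (auto simp: rota_baxter_system_def)

lemma exists_quotient:
  assumes "a \<in> carrier G" "c \<in> carrier G"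
  obtains b where "b \<in> carrier G" "B1 a \<otimes> B1 b = B1 c" "B2 b \<otimes> B2 a = B2 c"
proof -
  let ?b = "inv (B1 a) \<otimes> c \<otimes> inv (B2 a)"
  have b: "?b \<in> carrier G" using assms by (simp add: B1_closed B2_closed)
  have c: "B1 a \<otimes> ?b \<otimes> B2 a = c"
    using assms by (simp add: B1_closed B2_closed m_assoc) (simp add: B1_closed m_assoc[symmetric])
  have "B1 a \<otimes> B1 ?b = B1 c" using B1_mult[OF assms(1) b] c by simp
  moreover have "B2 ?b \<otimes> B2 a = B2 c" using B2_mult[OF assms(1) b] c by simp
  ultimately show thesis using b that by blast
qed

lemma exists_neutral:
  obtains e where "e \<in> carrier G" "B1 e = \<one>" "B2 e = \<one>"
proof -
  obtain e where "e \<in> carrier G" "B1 \<one> \<otimes> B1 e = B1 \<one>" "B2 e \<otimes> B2 \<one> = B2 \<one>"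
    using exists_quotient[OF one_closed one_closed] .
  then show thesis using that B1_closed B2_closed by simp
qed

lemma exists_inverse:
  assumes "a \<in> carrier G"
  obtains b where "b \<in> carrier G" "B1 b = inv (B1 a)" "B2 b = inv (B2 a)"
proof -
  obtain e where e: "e \<in> carrier G" "B1 e = \<one>" "B2 e = \<one>" by (rule exists_neutral)
  obtain b where b: "b \<in> carrier G" "B1 a \<otimes> B1 b = B1 e" "B2 b \<otimes> B2 a = B2 e"
    using exists_quotient[OF assms e(1)] .
  have "B1 b \<otimes> B1 a = \<one>" using b e assms by (simp add: B1_closed inv_comm)
  then have "B1 b = inv (B1 a)" using b assms by (simp add: B1_closed inv_equality)
  moreover have "B2 b = inv (B2 a)" using b e assms by (simp add: B2_closed inv_equality)
  ultimately show thesis using b(1) that by blast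
qed

lemma op_product_subgroup_graph: "op_product_subgroup G G ((\<lambda>a. (B1 a, B2 a)) ` carrier G)"
proof (intro op_product_subgroup.intro op_product_subgroup_axioms.intro is_group)
  show "(\<lambda>a. (B1 a, B2 a)) ` carrier G \<subseteq> carrier G \<times> carrier G"
    using B1_closed B2_closed by auto
  obtain e where "e \<in> carrier G" "B1 e = \<one>" "B2 e = \<one>" by (rule exists_neutral)
  then show "(\<one>, \<one>) \<in> (\<lambda>a. (B1 a, B2 a)) ` carrier G" by (intro image_eqI[where x = e]) auto
next
  fix x y x' y'
  assume "(x, y) \<in> (\<lambda>a. (B1 a, B2 a)) ` carrier G" "(x', y') \<in> (\<lambda>a. (B1 a, B2 a)) ` carrier G"
  then obtain a b where "a \<in> carrier G" "b \<in> carrier G" "x = B1 a" "y = B2 a" "x' = B1 b" "y' = B2 b"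
    by auto
  then have "(x \<otimes> x', y' \<otimes> y) = (B1 (B1 a \<otimes> b \<otimes> B2 a), B2 (B1 a \<otimes> b \<otimes> B2 a))"
    by (simp add: B1_mult B2_mult)
  moreover have "B1 a \<otimes> b \<otimes> B2 a \<in> carrier G"
    using \<open>a \<in> carrier G\<close> \<open>b \<in> carrier G\<close> by (simp add: B1_closed B2_closed)
  ultimately show "(x \<otimes> x', y' \<otimes> y) \<in> (\<lambda>a. (B1 a, B2 a)) ` carrier G" by (rule image_eqI)
next
  fix x y assume "(x, y) \<in> (\<lambda>a. (B1 a, B2 a)) ` carrier G"
  then obtain a where "a \<in> carrier G" "x = B1 a" "y = B2 a" by auto
  then obtain b where "b \<in> carrier G" "B1 b = inv x" "B2 b = inv y" by (metis exists_inverse)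
  then show "(inv x, inv y) \<in> (\<lambda>a. (B1 a, B2 a)) ` carrier G" by (intro image_eqI[where x = b]) auto
qed

end

theorem proposition5p4:
  fixes G :: "('a, 'b) monoid_scheme" and B1 B2 :: "'a \<Rightarrow> 'a"
  assumes rbs: "rota_baxter_system G B1 B2"
  defines "G1 \<equiv> B1 ` carrier G" and "G2 \<equiv> B2 ` carrier G"
      and "H1 \<equiv> B1 ` rb_ker G B2" and "H2 \<equiv> B2 ` rb_ker G B1"
  shows "subgroup G1 G \<and> subgroup G2 G
       \<and> H1 \<lhd> (G\<lparr>carrier := G1\<rparr>) \<and> H2 \<lhd> (G\<lparr>carrier := G2\<rparr>)
       \<and> (\<exists>f. (\<forall>a \<in> carrier G. f (B1 a <#\<^bsub>G\<^esub> H1) = B2 a <#\<^bsub>G\<^esub> H2)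
              \<and> bij_betw f (carrier ((G\<lparr>carrier := G1\<rparr>) Mod H1)) (carrier ((G\<lparr>carrier := G2\<rparr>) Mod H2))
              \<and> (\<forall>P \<in> carrier ((G\<lparr>carrier := G1\<rparr>) Mod H1). \<forall>Q \<in> carrier ((G\<lparr>carrier := G1\<rparr>) Mod H1).
                   f (P \<otimes>\<^bsub>((G\<lparr>carrier := G1\<rparr>) Mod H1)\<^esub> Q)
                     = f Q \<otimes>\<^bsub>((G\<lparr>carrier := G2\<rparr>) Mod H2)\<^esub> f P))"
proof -
  have "group G" using rbs by (simp add: rota_baxter_system_def)
  interpret rota_baxter_group G B1 B2
    using \<open>group G\<close> rbs by (intro rota_baxter_group.intro rota_baxter_group_axioms.intro)
  define S where "S = (\<lambda>a. (B1 a, B2 a)) ` carrier G"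
  interpret op_product_subgroup G G S
    unfolding S_def by (rule op_product_subgroup_graph)
  have projections: "fst ` S = G1" "snd ` S = G2"
    by (simp_all add: S_def G1_def G2_def image_image)
  have kernels: "{x. (x, \<one>\<^bsub>G\<^esub>) \<in> S} = H1" "{y. (\<one>\<^bsub>G\<^esub>, y) \<in> S} = H2"
    unfolding S_def H1_def H2_def rb_ker_def by force+
  interpret R: op_subdirect_product "G\<lparr>carrier := G1\<rparr>" "G\<lparr>carrier := G2\<rparr>" S
    using op_subdirect_product_restrict by (simp add: projections)
  show ?thesis
  proof (intro conjI exI ballI)
    show "subgroup G1 G" "subgroup G2 G"
      using subgroup_fst_image subgroup_snd_image by (simp_all add: projections)
    show "H1 \<lhd> G\<lparr>carrier := G1\<rparr>" "H2 \<lhd> G\<lparr>carrier := G2\<rparr>"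
      using R.fst_kernel_normal R.snd_kernel_normal by (simp_all add: kernels)
    show "R.coset_map (B1 a <#\<^bsub>G\<^esub> H1) = B2 a <#\<^bsub>G\<^esub> H2" if "a \<in> carrier G" for a
    proof -
      have "(B1 a, B2 a) \<in> S" using that by (simp add: S_def)
      then show ?thesis using R.coset_map_l_coset by (simp add: kernels)
    qed
  qed (use R.coset_map_bij R.coset_map_mult in \<open>simp_all add: kernels\<close>)
qed

end
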